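(* In the setting below, let $L_{\Sigma_1,\alpha_1}$ be any finite-dimensional Krein subspace of $L_{\Sigma_1}$. Then there exists a finite-dimensional Krein subspace $L_{\Sigma,\alpha}$ of $L_\Sigma$ such that for every $\phi\in L_{\Sigma_1,\alpha_1}$ there are $\phi',\phi''\in L_{\Sigma,\alpha}$ with $$u_M(\phi,\phi',\phi'')=(u_{M_1}(\phi),\phi'',\phi').$$
   Context: A classical free fermionic field theory on a spacetime system is given as follows. To each (oriented) hypersurface $\Sigma$ is associated a real separable Krein space $(L_\Sigma,g_\Sigma)$ (a real inner product space with an orthogonal decomposition $L_\Sigma=L_{\Sigma,+}\oplus L_{\Sigma,-}$, $g_\Sigma$ positive definite and complete on $L_{\Sigma,+}$, negative definite and complete on $L_{\Sigma,-}$). A finite-dimensional Krein subspace is a finite-dimensional subspace on which $g_\Sigma$ is non-degenerate. For $\overline{\Sigma}$, $L_{\overline\Sigma}$ is identified with $L_\Sigma$ as a vector space with $g_{\overline\Sigma}=-g_\Sigma$. If $\Sigma$ decomposes as $\Sigma_1\cup\cdots\cup\Sigma_n$, then $L_\Sigma\cong L_{\Sigma_1}\oplus\cdots\oplus L_{\Sigma_n}$ isometrically. To each region $N$ is associated a real vector space $L_N$ and a linear map $r_N:L_N\to L_{\partial N}$ whose image $L_{\tilde N}$ is a hypermaximal neutral subspace of $L_{\partial N}$ ($g_{\partial N}$ vanishes on it and it equals its own orthogonal complement). For a region $N$, $u_N:L_{\partial N}\to L_{\partial N}$ is the unique linear map with $u_N^2=\mathrm{id}$, mapping $L_{\partial N,\pm}$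 onto $L_{\partial N,\mp}$ with $g_{\partial N}(u_Nx,u_Ny)=-g_{\partial N}(x,y)$, and equal to the identity on $L_{\tilde N}$. Setting: $M$ is a region with boundary decomposing as a disjoint union $\partial M=\Sigma_1\cup\Sigma\cup\overline{\Sigma'}$, $\Sigma'$ a copy of $\Sigma$, and $M_1$ is the region obtained by gluing $M$ to itself along $\Sigma,\overline{\Sigma'}$ (so $\partial M_1=\Sigma_1$). Elements of $L_{\partial M}=L_{\Sigma_1}\oplus L_\Sigma\oplus L_{\overline{\Sigma'}}$ are written as triples, with $L_{\overline{\Sigma'}}$ identified with $L_\Sigma$. Gluing axiom: there is an injective linear map $r_{M;\Sigma,\overline{\Sigma'}}:L_{M_1}\to L_M$ whose image is exactly the set of $x\in L_M$ for which the $L_\Sigma$- and $L_{\overline{\Sigma'}}$-components of $r_M(x)$ coincide, and such that $r_{M_1}$ equals $r_M\circ r_{M;\Sigma,\overline{\Sigma'}}$ followed by the projection onto $L_{\Sigma_1}$. *)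

theory Defs
  imports "HOL-Analysis.Analysis"
begin

definition form_complete_on :: "('a::real_vector \<Rightarrow> 'a \<Rightarrow> real) \<Rightarrow> 'a set \<Rightarrow> bool" where
  "form_complete_on h S \<longleftrightarrow>
     (\<forall>s::nat \<Rightarrow> 'a. (\<forall>n. s n \<in> S) \<and>
        (\<forall>e>0. \<exists>K. \<forall>m n. K \<le> m \<longrightarrow> K \<le> n \<longrightarrow> sqrt (h (s m - s n) (s m - s n)) < e)
        \<longrightarrow> (\<exists>x\<in>S. \<forall>e>0. \<exists>K. \<forall>n. K \<le> n \<longrightarrow> sqrt (h (s n - x) (s n - x)) < e))"

definition form_separable_on :: "('a::real_vector \<Rightarrow> 'a \<Rightarrow> real) \<Rightarrow> 'a set \<Rightarrow> bool" where
  "form_separable_on h S \<longleftrightarrow>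
     (\<exists>D. countable D \<and> D \<subseteq> S \<and>
        (\<forall>x\<in>S. \<forall>e>0. \<exists>d\<in>D. sqrt (h (x - d) (x - d)) < e))"

definition krein_space :: "('a::real_vector \<Rightarrow> 'a \<Rightarrow> real) \<Rightarrow> 'a set \<Rightarrow> 'a set \<Rightarrow> bool" where
  "krein_space g P N \<longleftrightarrow>
     bilinear g \<and> (\<forall>x y. g x y = g y x) \<and>
     subspace P \<and> subspace N \<and> P \<inter> N = {0} \<and> (\<forall>x. \<exists>p\<in>P. \<exists>n\<in>N. x = p + n) \<and>
     (\<forall>p\<in>P. \<forall>n\<in>N. g p n = 0) \<and>
     (\<forall>x\<in>P. x \<noteq> 0 \<longrightarrow> g x x > 0) \<and> (\<forall>x\<in>N. x \<noteq> 0 \<longrightarrow> g x x < 0) \<and>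
     form_complete_on g P \<and> form_complete_on (\<lambda>x y. - g x y) N \<and>
     form_separable_on g P \<and> form_separable_on (\<lambda>x y. - g x y) N"

definition fd_krein_subspace :: "('a::real_vector \<Rightarrow> 'a \<Rightarrow> real) \<Rightarrow> 'a set \<Rightarrow> bool" where
  "fd_krein_subspace g S \<longleftrightarrow>
     subspace S \<and> (\<exists>B. finite B \<and> S = span B) \<and>
     (\<forall>x\<in>S. (\<forall>y\<in>S. g x y = 0) \<longrightarrow> x = 0)"

definition hypermaximal_neutral :: "('a::real_vector \<Rightarrow> 'a \<Rightarrow> real) \<Rightarrow> 'a set \<Rightarrow> bool" where
  "hypermaximal_neutral g L \<longleftrightarrow>
     (\<forall>x\<in>L. \<forall>y\<in>L. g x y = 0) \<and> {y. \<forall>x\<in>L. g x y = 0} = L"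

text \<open>The map u_N of a region N with boundary Krein space (g,P,N) and image L of r_N.\<close>
definition is_u_map :: "('a::real_vector \<Rightarrow> 'a \<Rightarrow> real) \<Rightarrow> 'a set \<Rightarrow> 'a set \<Rightarrow> 'a set \<Rightarrow> ('a \<Rightarrow> 'a) \<Rightarrow> bool" where
  "is_u_map g P N L u \<longleftrightarrow>
     linear u \<and> (\<forall>x. u (u x) = x) \<and> u ` P = N \<and> u ` N = P \<and>
     (\<forall>x y. g (u x) (u y) = - g x y) \<and> (\<forall>x\<in>L. u x = x)"

text \<open>Boundary form of M: L_Sigma1 (+) L_Sigma (+) L_(Sigma' bar), the last with form -g.\<close>
definition bdry_form :: "('a::real_vector \<Rightarrow> 'a \<Rightarrow> real) \<Rightarrow> ('b::real_vector \<Rightarrow> 'b \<Rightarrow> real)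
    \<Rightarrow> 'a \<times> 'b \<times> 'b \<Rightarrow> 'a \<times> 'b \<times> 'b \<Rightarrow> real" where
  "bdry_form g1 g x y = g1 (fst x) (fst y) + g (fst (snd x)) (fst (snd y)) - g (snd (snd x)) (snd (snd y))"

end

theory Submission
  imports Defs
begin

text \<open>Split \<phi> = l + w into eigenvectors of the involution u_M1 for the eigenvalues 1 and -1.
Since the image of r_M1 is hypermaximal neutral, the fixed points of u_M1 are boundary values
of M1, so by the gluing axiom l lifts to a fixed point (l, a, a) of u_M. The fundamental
symmetry J (identity on the positive, minus identity on the negative part) anticommutes with
every u-map; hence J w is a fixed point of u_M1 and lifts to a fixed point (J w, c, c) of u_M,
and the fundamental symmetry of the boundary of M maps this lift to the -1 eigenvector
(w, J c, - J c) of u_M. Adding, \<phi>' = a + J c and \<phi>'' = a - J c do the job.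
The solutions for a basis of the given subspace span a finite-dimensional space, which becomes
a Krein subspace once the positive and negative parts of its spanning vectors are added.\<close>

definition complementary :: "'a::real_vector set \<Rightarrow> 'a set \<Rightarrow> bool" where
  "complementary P N \<longleftrightarrow>
     subspace P \<and> subspace N \<and> P \<inter> N = {0} \<and> (\<forall>x. \<exists>p\<in>P. \<exists>n\<in>N. x = p + n)"

definition fundamental_symmetry :: "'a::real_vector set \<Rightarrow> 'a set \<Rightarrow> ('a \<Rightarrow> 'a) \<Rightarrow> bool" where
  "fundamental_symmetry P N J \<longleftrightarrow> (\<forall>p\<in>P. \<forall>n\<in>N. J (p + n) = p - n)"

lemma krein_space_complementary: "krein_space g P N \<Longrightarrow> complementary P N"
  by (simp add: krein_space_def complementary_def)

lemma complementary_swap: "complementary P N \<Longrightarrow> complementary N P"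
  unfolding complementary_def by (auto simp: Int_commute) (metis add.commute)

lemma complementary_Times:
  assumes "complementary P N" and "complementary P' N'"
  shows "complementary (P \<times> P') (N \<times> N')"
  unfolding complementary_def
proof (intro conjI allI)
  show "subspace (P \<times> P')" "subspace (N \<times> N')"
    using assms by (simp_all add: complementary_def subspace_Times)
  show "P \<times> P' \<inter> N \<times> N' = {0}"
    using assms by (simp add: complementary_def Times_Int_Times zero_prod_def)
  fix x :: "'a \<times> 'b"
  obtain p n where "p \<in> P" "n \<in> N" "fst x = p + n"
    using assms(1) unfolding complementary_def by blast
  moreover obtain p' n' where "p' \<in> P'" "n' \<in> N'" "snd x = p' + n'"
    using assms(2) unfolding complementary_def by blast
  ultimately show "\<exists>q\<in>P \<times> P'. \<exists>r\<in>N \<times> N'. x = q + r"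
    by (intro bexI[of _ "(p, p')"] bexI[of _ "(n, n')"]) (auto simp: prod_eq_iff)
qed

lemma complementary_decomp_unique:
  assumes "complementary P N" "p \<in> P" "n \<in> N" "p' \<in> P" "n' \<in> N" "p + n = p' + n'"
  shows "p = p'"
proof -
  have "p - p' = n' - n"
    using assms(6) by (simp add: algebra_simps)
  moreover have "p - p' \<in> P" "n' - n \<in> N"
    using assms(1-5) by (simp_all add: complementary_def subspace_diff)
  ultimately have "p - p' \<in> P \<inter> N"
    by simp
  then show ?thesis
    using assms(1) unfolding complementary_def by simp
qed

lemma fundamental_symmetry_exists:
  assumes "complementary P N"
  shows "\<exists>J. fundamental_symmetry P N J"
proof -
  obtain pos where pos: "\<And>x. pos x \<in> P \<and> x - pos x \<in> N"
    using assms unfolding complementary_def by (metis add_diff_cancel_left')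
  have "pos (p + n) = p" if "p \<in> P" "n \<in> N" for p n
    using complementary_decomp_unique[OF assms _ _ that, of "pos (p + n)" "p + n - pos (p + n)"]
      pos by simp
  then have "fundamental_symmetry P N (\<lambda>x. pos x - (x - pos x))"
    unfolding fundamental_symmetry_def by simp
  then show ?thesis
    by blast
qed

lemma fundamental_symmetry_swap:
  "fundamental_symmetry P N J \<Longrightarrow> fundamental_symmetry N P (\<lambda>x. - J x)"
  unfolding fundamental_symmetry_def by (metis add.commute minus_diff_eq)

lemma fundamental_symmetry_Times:
  "fundamental_symmetry P N J \<Longrightarrow> fundamental_symmetry P' N' J' \<Longrightarrow>
    fundamental_symmetry (P \<times> P') (N \<times> N') (map_prod J J')"
  unfolding fundamental_symmetry_def by auto

lemma fundamental_symmetry_involution: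
  assumes "complementary P N" "fundamental_symmetry P N J"
  shows "J (J x) = x"
proof -
  obtain p n where pn: "p \<in> P" "n \<in> N" "x = p + n"
    using assms(1) unfolding complementary_def by blast
  then have "- n \<in> N"
    using assms(1) by (simp add: complementary_def subspace_neg)
  then show ?thesis
    using assms(2) pn unfolding fundamental_symmetry_def by (metis diff_conv_add_uminus minus_minus)
qed

lemma fundamental_symmetry_uminus:
  assumes "complementary P N" "fundamental_symmetry P N J"
  shows "J (- x) = - J x"
proof -
  obtain p n where pn: "p \<in> P" "n \<in> N" "x = p + n"
    using assms(1) unfolding complementary_def by blast
  then have "- p \<in> P" "- n \<in> N"
    using assms(1) by (simp_all add: complementary_def subspace_neg)
  then have "J (- p + - n) = - p - - n"
    using assms(2) unfolding fundamental_symmetry_def by blast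
  moreover have "J x = p - n"
    using assms(2) pn unfolding fundamental_symmetry_def by blast
  ultimately show ?thesis
    using pn by simp
qed

lemma is_u_map_anticommute:
  assumes u: "is_u_map g P N L u" and PN: "complementary P N" and J: "fundamental_symmetry P N J"
  shows "J (u x) = - u (J x)"
proof -
  obtain p n where pn: "p \<in> P" "n \<in> N" "x = p + n"
    using PN unfolding complementary_def by blast
  have lin: "linear u" and "u p \<in> N" "u n \<in> P"
    using u pn unfolding is_u_map_def by auto
  then have "J (u x) = u n - u p"
    using J pn unfolding fundamental_symmetry_def by (metis add.commute linear_add)
  moreover have "u (J x) = u p - u n"
    using J pn lin unfolding fundamental_symmetry_def by (simp add: linear_diff)
  ultimately show ?thesis
    by simp
qed

lemma is_u_map_fixed_point_mem:
  assumes u: "is_u_map g P N L u" and L: "hypermaximal_neutral g L" and "u x = x"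
  shows "x \<in> L"
proof -
  have "g l x = 0" if "l \<in> L" for l
  proof -
    have "g l x = g (u l) (u x)"
      using u that \<open>u x = x\<close> unfolding is_u_map_def by simp
    also have "\<dots> = - g l x"
      using u unfolding is_u_map_def by blast
    finally show ?thesis
      by simp
  qed
  then show ?thesis
    using L unfolding hypermaximal_neutral_def by blast
qed

lemma involution_eigen_split:
  assumes "linear u" "\<And>x. u (u x) = x"
  shows "\<exists>l w. x = l + w \<and> u x = l - w \<and> u l = l \<and> u w = - w"
proof (intro exI conjI)
  let ?l = "(1/2) *\<^sub>R (x + u x)" and ?w = "(1/2) *\<^sub>R (x - u x)"
  show "x = ?l + ?w" "u x = ?l - ?w"
    by (simp_all add: algebra_simps flip: scaleR_add_left)
  show "u ?l = ?l" "u ?w = - ?w"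
    using assms by (simp_all add: linear_scale linear_add linear_diff algebra_simps)
qed

lemma glued_fixed_point_lift:
  assumes rM1_hyp: "hypermaximal_neutral g1 (range rM1)"
    and uM1: "is_u_map g1 P1 N1 (range rM1) uM1"
    and uM: "is_u_map gM PM NM (range rM) uM"
    and glue_range: "range rglue = {x. fst (snd (rM x)) = snd (snd (rM x))}"
    and glue_comp: "\<forall>y. rM1 y = fst (rM (rglue y))"
    and fixed: "uM1 l = l"
  shows "\<exists>a. uM (l, a, a) = (l, a, a)"
proof -
  obtain y where "l = rM1 y"
    using is_u_map_fixed_point_mem[OF uM1 rM1_hyp fixed] by blast
  moreover have "fst (snd (rM (rglue y))) = snd (snd (rM (rglue y)))"
    using glue_range by blast
  ultimately have "rM (rglue y) = (l, fst (snd (rM (rglue y))), fst (snd (rM (rglue y))))"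
    using glue_comp by (simp add: prod_eq_iff)
  moreover have "uM (rM (rglue y)) = rM (rglue y)"
    using uM unfolding is_u_map_def by blast
  ultimately show ?thesis
    by metis
qed

lemma glued_u_map_solution:
  fixes uM :: "'a::real_vector \<times> 'b::real_vector \<times> 'b \<Rightarrow> 'a \<times> 'b \<times> 'b"
  assumes K1: "krein_space g1 P1 N1" and K: "krein_space g P N"
    and rM1_hyp: "hypermaximal_neutral g1 (range rM1)"
    and uM1: "is_u_map g1 P1 N1 (range rM1) uM1"
    and uM: "is_u_map gM (P1 \<times> P \<times> N) (N1 \<times> N \<times> P) (range rM) uM"
    and glue_range: "range rglue = {x. fst (snd (rM x)) = snd (snd (rM x))}"
    and glue_comp: "\<forall>y. rM1 y = fst (rM (rglue y))"
  shows "\<exists>\<phi>' \<phi>''. uM (\<phi>, \<phi>', \<phi>'') = (uM1 \<phi>, \<phi>'', \<phi>')"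
proof -
  note lift = glued_fixed_point_lift[OF rM1_hyp uM1 uM glue_range glue_comp]
  have PN1: "complementary P1 N1" and PN: "complementary P N"
    using K1 K by (simp_all add: krein_space_complementary)
  obtain J1 where J1: "fundamental_symmetry P1 N1 J1"
    using fundamental_symmetry_exists[OF PN1] ..
  obtain J where J: "fundamental_symmetry P N J"
    using fundamental_symmetry_exists[OF PN] ..
  define JM where "JM = map_prod J1 (map_prod J (\<lambda>x. - J x))"
  have PNM: "complementary (P1 \<times> P \<times> N) (N1 \<times> N \<times> P)"
    using PN1 PN by (simp add: complementary_Times complementary_swap)
  have JM: "fundamental_symmetry (P1 \<times> P \<times> N) (N1 \<times> N \<times> P) JM"
    unfolding JM_def using J1 J by (simp add: fundamental_symmetry_Times fundamental_symmetry_swap)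
  have lin1: "linear uM1" "\<And>x. uM1 (uM1 x) = x" and lin: "linear uM"
    using uM1 uM unfolding is_u_map_def by auto
  obtain l w where split: "\<phi> = l + w" "uM1 \<phi> = l - w" "uM1 l = l" "uM1 w = - w"
    using involution_eigen_split[OF lin1] by blast
  obtain a where a: "uM (l, a, a) = (l, a, a)"
    using lift[OF split(3)] ..
  have "uM1 (J1 w) = J1 w"
    using is_u_map_anticommute[OF uM1 PN1 J1, of w] split(4)
      fundamental_symmetry_uminus[OF PN1 J1] by simp
  then obtain c where c: "uM (J1 w, c, c) = (J1 w, c, c)"
    using lift by blast
  have "JM (J1 w, c, c) = (w, J c, - J c)"
    unfolding JM_def using fundamental_symmetry_involution[OF PN1 J1] by simp
  moreover have "JM (uM (J1 w, c, c)) = - uM (JM (J1 w, c, c))"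
    by (rule is_u_map_anticommute[OF uM PNM JM])
  ultimately have "(w, J c, - J c) = - uM (w, J c, - J c)"
    using c by simp
  then have w: "uM (w, J c, - J c) = - (w, J c, - J c)"
    by (metis minus_minus)
  have "uM (\<phi>, a + J c, a - J c) = uM ((l, a, a) + (w, J c, - J c))"
    using split(1) by simp
  also have "\<dots> = uM (l, a, a) + uM (w, J c, - J c)"
    using lin by (rule linear_add)
  also have "\<dots> = (uM1 \<phi>, a - J c, a + J c)"
    using a w split(2) by simp
  finally show ?thesis
    by blast
qed

lemma solution_set_subspace:
  assumes uM: "linear uM" and uM1: "linear uM1" and V: "subspace V"
  shows "subspace {\<phi>. \<exists>\<phi>'\<in>V. \<exists>\<phi>''\<in>V. uM (\<phi>, \<phi>', \<phi>'') = (uM1 \<phi>, \<phi>'', \<phi>')}"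
    (is "subspace ?T")
proof -
  have "uM (0, 0, 0) = (uM1 0, 0, 0)"
    using linear_0[OF uM] linear_0[OF uM1] by (simp add: zero_prod_def)
  then have "0 \<in> ?T"
    using subspace_0[OF V] by blast
  moreover have "x + y \<in> ?T" if x: "x \<in> ?T" and y: "y \<in> ?T" for x y
  proof -
    obtain x' x'' where "x' \<in> V" "x'' \<in> V" and sx: "uM (x, x', x'') = (uM1 x, x'', x')"
      using x by blast
    obtain y' y'' where "y' \<in> V" "y'' \<in> V" and sy: "uM (y, y', y'') = (uM1 y, y'', y')"
      using y by blast
    have "uM (x + y, x' + y', x'' + y'') = uM (x, x', x'') + uM (y, y', y'')"
      using linear_add[OF uM, of "(x, x', x'')" "(y, y', y'')"] by simp
    also have "\<dots> = (uM1 (x + y), x'' + y'', x' + y')"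
      using sx sy linear_add[OF uM1] by simp
    finally show ?thesis
      using subspace_add[OF V] \<open>x' \<in> V\<close> \<open>x'' \<in> V\<close> \<open>y' \<in> V\<close> \<open>y'' \<in> V\<close> by blast
  qed
  moreover have "r *\<^sub>R x \<in> ?T" if x: "x \<in> ?T" for r x
  proof -
    obtain x' x'' where "x' \<in> V" "x'' \<in> V" and sx: "uM (x, x', x'') = (uM1 x, x'', x')"
      using x by blast
    have "uM (r *\<^sub>R x, r *\<^sub>R x', r *\<^sub>R x'') = r *\<^sub>R uM (x, x', x'')"
      using linear_scale[OF uM, of r "(x, x', x'')"] by simp
    also have "\<dots> = (uM1 (r *\<^sub>R x), r *\<^sub>R x'', r *\<^sub>R x')"
      using sx linear_scale[OF uM1] by simp
    finally show ?thesis
      using subspace_scale[OF V] \<open>x' \<in> V\<close> \<open>x'' \<in> V\<close> by blast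
  qed
  ultimately show ?thesis
    unfolding subspace_def by blast
qed

lemma solutions_in_finite_span:
  assumes "linear uM" "linear uM1" "finite B"
    and sol: "\<forall>\<phi>. \<exists>\<phi>' \<phi>''. uM (\<phi>, \<phi>', \<phi>'') = (uM1 \<phi>, \<phi>'', \<phi>')"
  shows "\<exists>C. finite C \<and> (\<forall>\<phi>\<in>span B. \<exists>\<phi>'\<in>span C. \<exists>\<phi>''\<in>span C. uM (\<phi>, \<phi>', \<phi>'') = (uM1 \<phi>, \<phi>'', \<phi>'))"
proof -
  obtain f1 f2 where f: "\<forall>\<phi>. uM (\<phi>, f1 \<phi>, f2 \<phi>) = (uM1 \<phi>, f2 \<phi>, f1 \<phi>)"
    using sol by metis
  define C where "C = f1 ` B \<union> f2 ` B"
  let ?T = "{\<phi>. \<exists>\<phi>'\<in>span C. \<exists>\<phi>''\<in>span C. uM (\<phi>, \<phi>', \<phi>'') = (uM1 \<phi>, \<phi>'', \<phi>')}"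
  have "B \<subseteq> ?T"
    using f unfolding C_def by (blast intro: span_base)
  then have "span B \<subseteq> ?T"
    using solution_set_subspace[OF assms(1,2) subspace_span] by (rule span_minimal)
  moreover have "finite C"
    unfolding C_def using \<open>finite B\<close> by simp
  ultimately show ?thesis
    by blast
qed

lemma krein_space_fd_krein_subspace_superset:
  assumes K: "krein_space g P N" and "finite C"
  shows "\<exists>S. fd_krein_subspace g S \<and> C \<subseteq> S"
proof -
  have sP: "subspace P" and sN: "subspace N" and bil: "bilinear g" and sym: "\<forall>x y. g x y = g y x"
    and orth: "\<forall>p\<in>P. \<forall>n\<in>N. g p n = 0"
    and pos: "\<forall>x\<in>P. x \<noteq> 0 \<longrightarrow> g x x > 0" and neg: "\<forall>x\<in>N. x \<noteq> 0 \<longrightarrow> g x x < 0"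
    using K by (simp_all add: krein_space_def)
  have "\<forall>x. \<exists>p\<in>P. \<exists>n\<in>N. x = p + n"
    using K by (simp add: krein_space_def)
  then obtain pp nn where pn: "\<And>x. pp x \<in> P \<and> nn x \<in> N \<and> x = pp x + nn x"
    by metis
  define S where "S = span (pp ` C \<union> nn ` C)"
  have "C \<subseteq> S"
  proof
    fix c assume "c \<in> C"
    then have "pp c + nn c \<in> S"
      unfolding S_def by (blast intro: span_add span_base)
    then show "c \<in> S"
      using pn by metis
  qed
  moreover have "fd_krein_subspace g S"
    unfolding fd_krein_subspace_def
  proof (intro conjI ballI impI)
    show "subspace S"
      unfolding S_def by simp
    show "\<exists>B. finite B \<and> S = span B"
      unfolding S_def using \<open>finite C\<close> by (intro exI[of _ "pp ` C \<union> nn ` C"]) simp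
  next
    fix x assume "x \<in> S" and null: "\<forall>y\<in>S. g x y = 0"
    then obtain a b where ab: "a \<in> span (pp ` C)" "b \<in> span (nn ` C)" "x = a + b"
      unfolding S_def span_Un by blast
    moreover have "span (pp ` C) \<subseteq> S" "span (nn ` C) \<subseteq> S"
      unfolding S_def by (simp_all add: span_mono)
    ultimately have "a \<in> S" "b \<in> S"
      by blast+
    have "pp ` C \<subseteq> P" "nn ` C \<subseteq> N"
      using pn by auto
    then have "a \<in> P" "b \<in> N"
      using ab span_minimal[OF _ sP] span_minimal[OF _ sN] by blast+
    moreover have "g a b = 0" "g b a = 0"
      using orth sym calculation by simp_all
    moreover have "g x a = g a a + g b a" "g x b = g a b + g b b"
      using ab(3) bilinear_ladd[OF bil] by simp_all
    ultimately have "g a a = 0" "g b b = 0"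
      using null \<open>a \<in> S\<close> \<open>b \<in> S\<close> by simp_all
    then have "a = 0" "b = 0"
      using pos neg \<open>a \<in> P\<close> \<open>b \<in> N\<close> by (metis less_irrefl)+
    then show "x = 0"
      using ab(3) by simp
  qed
  ultimately show ?thesis
    by blast
qed

theorem mainTheorem2:
  fixes g1 :: "'a::real_vector \<Rightarrow> 'a \<Rightarrow> real" and P1 N1 :: "'a set"
    and g :: "'b::real_vector \<Rightarrow> 'b \<Rightarrow> real" and P N :: "'b set"
    and rM :: "'m::real_vector \<Rightarrow> 'a \<times> 'b \<times> 'b"
    and rM1 :: "'n::real_vector \<Rightarrow> 'a"
    and rglue :: "'n \<Rightarrow> 'm"
    and uM :: "'a \<times> 'b \<times> 'b \<Rightarrow> 'a \<times> 'b \<times> 'b"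
    and uM1 :: "'a \<Rightarrow> 'a"
    and S1 :: "'a set"
  assumes K1: "krein_space g1 P1 N1"
    and K: "krein_space g P N"
    and rM_lin: "linear rM"
    and rM_hyp: "hypermaximal_neutral (bdry_form g1 g) (range rM)"
    and rM1_lin: "linear rM1"
    and rM1_hyp: "hypermaximal_neutral g1 (range rM1)"
    and glue_lin: "linear rglue"
    and glue_inj: "inj rglue"
    and glue_range: "range rglue = {x. fst (snd (rM x)) = snd (snd (rM x))}"
    and glue_comp: "\<forall>y. rM1 y = fst (rM (rglue y))"
    and uM_def: "is_u_map (bdry_form g1 g) (P1 \<times> P \<times> N) (N1 \<times> N \<times> P) (range rM) uM"
    and uM1_def: "is_u_map g1 P1 N1 (range rM1) uM1"
    and S1: "fd_krein_subspace g1 S1"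
  shows "\<exists>S. fd_krein_subspace g S \<and>
           (\<forall>\<phi>\<in>S1. \<exists>\<phi>'\<in>S. \<exists>\<phi>''\<in>S. uM (\<phi>, \<phi>', \<phi>'') = (uM1 \<phi>, \<phi>'', \<phi>'))"
proof -
  have sol: "\<forall>\<phi>. \<exists>\<phi>' \<phi>''. uM (\<phi>, \<phi>', \<phi>'') = (uM1 \<phi>, \<phi>'', \<phi>')"
    using glued_u_map_solution[OF K1 K rM1_hyp uM1_def uM_def glue_range glue_comp] by blast
  obtain B where "finite B" "S1 = span B"
    using S1 unfolding fd_krein_subspace_def by blast
  moreover have "linear uM" "linear uM1"
    using uM_def uM1_def unfolding is_u_map_def by auto
  ultimately obtain C where "finite C"
    and C: "\<forall>\<phi>\<in>S1. \<exists>\<phi>'\<in>span C. \<exists>\<phi>''\<in>span C. uM (\<phi>, \<phi>', \<phi>'') = (uM1 \<phi>, \<phi>'', \<phi>')"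
    using solutions_in_finite_span[of uM uM1 B] sol by blast
  obtain S where S: "fd_krein_subspace g S" "C \<subseteq> S"
    using krein_space_fd_krein_subspace_superset[OF K \<open>finite C\<close>] by blast
  then have "span C \<subseteq> S"
    unfolding fd_krein_subspace_def by (simp add: span_minimal)
  then show ?thesis
    using S(1) C by blast
qed

end
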